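(* Let $\Omega$ be a finite set and let $p,q$ be probability distributions on $\Omega$. Let $X_1,X_2$ be drawn i.i.d. from $p$ and $\mathcal{S}=\{X_1,X_2\}$, and let $P^\star(\mathrm{acc})$ be the supremum of $\Pr(Z\in\mathcal{S})$ over all valid token-level selection rules with output $Z$. Then $P^\star(\mathrm{acc})=1$ if and only if $$\sum_{x\in\mathcal{A}}q(x)\ \ge\ \Big(\sum_{x\in\mathcal{A}}p(x)\Big)^2\qquad\text{for every subset }\mathcal{A}\subseteq\Omega.$$
   Context: A token-level selection rule is a conditional distribution $\mathcal{P}(\cdot\mid X_1,X_2)$ on $\Omega$; it is valid if its output $Z$ satisfies $\Pr(Z=z)=q(z)$ for all $z\in\Omega$, where $X_1,X_2$ are i.i.d. with law $p$. *)

theory Defs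
  imports "HOL-Probability.Probability"
begin

text \<open>A token-level selection rule is a Markov kernel K x1 x2 (a distribution on Omega
given the two draws). Joint law of (X1, X2, Z) with X1, X2 iid p.\<close>

definition joint_law :: "'a pmf \<Rightarrow> ('a \<Rightarrow> 'a \<Rightarrow> 'a pmf) \<Rightarrow> ('a \<times> 'a \<times> 'a) pmf" where
  "joint_law p K = bind_pmf p (\<lambda>x1. bind_pmf p (\<lambda>x2. map_pmf (\<lambda>z. (x1, x2, z)) (K x1 x2)))"

definition valid_rule :: "'a pmf \<Rightarrow> 'a pmf \<Rightarrow> ('a \<Rightarrow> 'a \<Rightarrow> 'a pmf) \<Rightarrow> bool" where
  "valid_rule p q K \<longleftrightarrow> map_pmf (\<lambda>(x1, x2, z). z) (joint_law p K) = q"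

definition acc_prob :: "'a pmf \<Rightarrow> ('a \<Rightarrow> 'a \<Rightarrow> 'a pmf) \<Rightarrow> real" where
  "acc_prob p K = measure_pmf.prob (joint_law p K) {(x1, x2, z). z \<in> {x1, x2}}"

definition P_star :: "'a pmf \<Rightarrow> 'a pmf \<Rightarrow> real" where
  "P_star p q = Sup {acc_prob p K | K. valid_rule p q K}"

end

theory Submission
  imports Defs
begin

text \<open>
  Necessity: Z \<in> {X1, X2} forces Z \<in> A unless X1 or X2 lies outside A, so every valid rule
  accepts with probability at most 1 - p(A)^2 + q(A).

  Sufficiency: the rule that outputs X1 with probability g(X1, X2) and X2 otherwise always
  accepts, and it is valid iff its output law r_g equals q. Minimise the defect
  \<Sum>(r_g - q)^2 over g \<in> [0,1]^(\<Omega>\<times>\<Omega>). At a minimiser, shifting a little weight at a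
  single pair (s, t) shows that r_g - q cannot be larger at the output than at the discarded
  token, so the set R where r_g - q is maximal is only ever output when both draws lie in R.
  Hence r_g(R) = p(R)^2 \<le> q(R), the maximum of r_g - q is \<le> 0, and since r_g and q both
  sum to 1 we get r_g = q.
\<close>

lemma measure_pair_pmf_Times:
  "measure_pmf.prob (pair_pmf M N) (A \<times> B) = measure_pmf.prob M A * measure_pmf.prob N B"
proof -
  have "emeasure (pair_pmf M N) (A \<times> B) = (\<integral>\<^sup>+x. emeasure N B * indicator A x \<partial>M)"
    unfolding pair_pmf_def emeasure_bind_pmf
    by (intro nn_integral_cong) (simp add: indicator_times nn_integral_cmult mult.commute)
  also have "\<dots> = emeasure N B * emeasure M A"
    by (rule nn_integral_cmult_indicator) simp
  finally show ?thesis
    by (simp add: measure_pmf.emeasure_eq_measure mult.commute flip: ennreal_mult)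
qed

lemma map_inputs_joint_law: "map_pmf (\<lambda>(x1, x2, z). (x1, x2)) (joint_law p K) = pair_pmf p p"
  unfolding joint_law_def pair_pmf_def
  by (simp add: map_bind_pmf pmf.map_comp o_def)

lemma valid_rule_acc_prob_le:
  assumes "valid_rule p q K"
  shows "acc_prob p K \<le> 1 - (measure_pmf.prob p A)^2 + measure_pmf.prob q A"
proof -
  let ?J = "joint_law p K"
  let ?output_in_A = "{(x1, x2, z). z \<in> A}"
  let ?inputs_in_A = "{(x1, x2, z). x1 \<in> A \<and> x2 \<in> A}"
  have "acc_prob p K \<le> measure_pmf.prob ?J (?output_in_A \<union> - ?inputs_in_A)"
    unfolding acc_prob_def by (intro measure_pmf.finite_measure_mono) auto
  also have "\<dots> \<le> measure_pmf.prob ?J ?output_in_A + measure_pmf.prob ?J (- ?inputs_in_A)"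
    by (rule measure_Un_le) auto
  also have "measure_pmf.prob ?J ?output_in_A = measure_pmf.prob q A"
    by (simp flip: assms[unfolded valid_rule_def] add: vimage_def case_prod_unfold)
  also have "measure_pmf.prob ?J (- ?inputs_in_A) = 1 - measure_pmf.prob ?J ?inputs_in_A"
    using measure_pmf.prob_compl[of ?inputs_in_A ?J] by (simp add: Compl_eq_Diff_UNIV)
  also have "measure_pmf.prob ?J ?inputs_in_A
      = measure_pmf.prob (map_pmf (\<lambda>(x1, x2, z). (x1, x2)) ?J) (A \<times> A)"
    by (simp add: vimage_def case_prod_unfold)
  also have "\<dots> = (measure_pmf.prob p A)^2"
    unfolding map_inputs_joint_law measure_pair_pmf_Times by (simp add: power2_eq_square)
  finally show ?thesis by simp
qed

lemma valid_rule_const: "valid_rule p q (\<lambda>_ _. q)"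
  unfolding valid_rule_def joint_law_def by (simp add: map_bind_pmf pmf.map_comp o_def)

lemma P_star_le:
  "P_star p q \<le> 1 - (measure_pmf.prob p A)^2 + measure_pmf.prob q A"
  unfolding P_star_def by (rule cSup_least) (use valid_rule_const valid_rule_acc_prob_le in auto)

lemma P_star_eq_1I:
  assumes "valid_rule p q K" and "acc_prob p K = 1"
  shows "P_star p q = 1"
  unfolding P_star_def
proof (rule cSup_eq_maximum)
  show "1 \<in> {acc_prob p K |K. valid_rule p q K}"
    using assms by force
  show "x \<le> 1" if "x \<in> {acc_prob p K |K. valid_rule p q K}" for x
    using that by (auto simp: acc_prob_def)
qed

definition coin_rule :: "('a \<Rightarrow> 'a \<Rightarrow> real) \<Rightarrow> 'a \<Rightarrow> 'a \<Rightarrow> 'a pmf" where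
  "coin_rule g x1 x2 = map_pmf (\<lambda>b. if b then x1 else x2) (bernoulli_pmf (g x1 x2))"

definition coin_biases :: "('a \<Rightarrow> 'a \<Rightarrow> real) set" where
  "coin_biases = {g. \<forall>x y. 0 \<le> g x y \<and> g x y \<le> 1}"

lemma acc_prob_coin_rule: "acc_prob p (coin_rule g) = 1"
  unfolding acc_prob_def
  by (subst measure_pmf.prob_eq_1) (auto simp: AE_measure_pmf_iff joint_law_def coin_rule_def)

lemma pmf_coin_rule:
  assumes "g \<in> coin_biases"
  shows "pmf (coin_rule g x1 x2) z = (if z = x1 then g x1 x2 else 0) + (if z = x2 then 1 - g x1 x2 else 0)"
proof -
  have "(\<lambda>b. if b then x1 else x2) -` {z} = (if z = x1 then {True} else {}) \<union> (if z = x2 then {False} else {})"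
    by (auto split: if_splits)
  then have "pmf (coin_rule g x1 x2) z
      = (\<Sum>b\<in>(if z = x1 then {True} else {}) \<union> (if z = x2 then {False} else {}). pmf (bernoulli_pmf (g x1 x2)) b)"
    unfolding coin_rule_def pmf_map by (simp add: measure_measure_pmf_finite)
  then show ?thesis
    using assms by (cases "x1 = x2") (simp_all add: sum.union_disjoint coin_biases_def)
qed

definition coin_output :: "'a::finite pmf \<Rightarrow> ('a \<Rightarrow> 'a \<Rightarrow> real) \<Rightarrow> 'a \<Rightarrow> real" where
  "coin_output p g z =
     (\<Sum>y\<in>UNIV. pmf p z * pmf p y * g z y) + (\<Sum>x\<in>UNIV. pmf p x * pmf p z * (1 - g x z))"

lemma pmf_output_coin_rule:
  fixes p :: "'a::finite pmf"
  assumes "g \<in> coin_biases"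
  shows "pmf (map_pmf (\<lambda>(x1, x2, z). z) (joint_law p (coin_rule g))) z = coin_output p g z"
proof -
  have "map_pmf (\<lambda>(x1, x2, z). z) (joint_law p (coin_rule g))
      = bind_pmf p (\<lambda>x1. bind_pmf p (\<lambda>x2. coin_rule g x1 x2))"
    unfolding joint_law_def by (simp add: map_bind_pmf pmf.map_comp o_def)
  moreover have "pmf (bind_pmf p (\<lambda>x1. bind_pmf p (\<lambda>x2. coin_rule g x1 x2))) z
     = (\<Sum>x1\<in>UNIV. (\<Sum>x2\<in>UNIV.
          ((if z = x1 then g x1 x2 else 0) + (if z = x2 then 1 - g x1 x2 else 0)) * pmf p x2) * pmf p x1)"
    using assms by (simp add: pmf_bind integral_measure_pmf_real[where A=UNIV] pmf_coin_rule)
  moreover have "\<dots> = (\<Sum>x1\<in>UNIV. \<Sum>x2\<in>UNIV. if z = x1 then pmf p x1 * pmf p x2 * g x1 x2 else 0)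
      + (\<Sum>x1\<in>UNIV. \<Sum>x2\<in>UNIV. if z = x2 then pmf p x1 * pmf p x2 * (1 - g x1 x2) else 0)"
    unfolding sum.distrib[symmetric] sum_distrib_right
    by (intro sum.cong refl) (auto simp: algebra_simps)
  moreover have "\<dots> = coin_output p g z"
    unfolding coin_output_def
    by (simp add: sum.delta sum.swap[where A=UNIV and B=UNIV] cong: if_cong)
  ultimately show ?thesis by simp
qed

lemma valid_coin_rule_iff:
  fixes p q :: "'a::finite pmf"
  assumes "g \<in> coin_biases"
  shows "valid_rule p q (coin_rule g) \<longleftrightarrow> (\<forall>z. coin_output p g z = pmf q z)"
  unfolding valid_rule_def using pmf_output_coin_rule[OF assms]
  by (metis pmf_eqI)

lemma sum_coin_output:
  fixes p :: "'a::finite pmf"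
  assumes "g \<in> coin_biases"
  shows "(\<Sum>z\<in>UNIV. coin_output p g z) = 1"
  using assms by (simp flip: pmf_output_coin_rule add: sum_pmf_eq_1)

definition output_defect :: "'a::finite pmf \<Rightarrow> 'a pmf \<Rightarrow> ('a \<Rightarrow> 'a \<Rightarrow> real) \<Rightarrow> real" where
  "output_defect p q g = (\<Sum>w\<in>UNIV. (coin_output p g w - pmf q w)^2)"

lemma coin_output_perturb:
  fixes p :: "'a::finite pmf" and s t :: 'a and e :: real
  defines "\<delta> \<equiv> pmf p s * pmf p t * e"
  shows "coin_output p (\<lambda>x y. g x y + (if x = s \<and> y = t then e else 0)) w
     = coin_output p g w + (if w = s then \<delta> else 0) - (if w = t then \<delta> else 0)"
proof -
  have "pmf p w * pmf p y * (g w y + (if w = s \<and> y = t then e else 0))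
      = pmf p w * pmf p y * g w y + (if w = s \<and> y = t then \<delta> else 0)" for y
    by (auto simp: \<delta>_def algebra_simps)
  moreover have "pmf p x * pmf p w * (1 - (g x w + (if x = s \<and> w = t then e else 0)))
      = pmf p x * pmf p w * (1 - g x w) - (if x = s \<and> w = t then \<delta> else 0)" for x
    by (auto simp: \<delta>_def algebra_simps)
  ultimately show ?thesis
    unfolding coin_output_def by (cases "w = s"; cases "w = t") (simp_all add: sum.distrib sum_subtractf)
qed

lemma output_defect_perturb:
  fixes p q :: "'a::finite pmf" and g :: "'a \<Rightarrow> 'a \<Rightarrow> real" and s t :: 'a and e :: real
  assumes "s \<noteq> t"
  defines "d \<equiv> \<lambda>w. coin_output p g w - pmf q w" and "\<delta> \<equiv> pmf p s * pmf p t * e"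
  shows "output_defect p q (\<lambda>x y. g x y + (if x = s \<and> y = t then e else 0))
     = output_defect p q g + 2 * \<delta> * (d s - d t) + 2 * \<delta>^2"
proof -
  have "output_defect p q (\<lambda>x y. g x y + (if x = s \<and> y = t then e else 0))
      = (\<Sum>w\<in>UNIV. (d w + (if w = s then \<delta> else 0) - (if w = t then \<delta> else 0))^2)"
    unfolding output_defect_def coin_output_perturb d_def \<delta>_def by (simp add: algebra_simps)
  also have "\<dots> = (\<Sum>w\<in>UNIV. (d w)^2 + (if w = s then 2 * \<delta> * d s + \<delta>^2 else 0)
                                 + (if w = t then \<delta>^2 - 2 * \<delta> * d t else 0))"
    using assms by (intro sum.cong refl) (auto simp: power2_eq_square algebra_simps)
  also have "\<dots> = output_defect p q g + 2 * \<delta> * (d s - d t) + 2 * \<delta>^2"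
    by (simp add: sum.distrib output_defect_def d_def algebra_simps)
  finally show ?thesis .
qed

lemma nonneg_if_nonneg_near_zero:
  fixes a \<eta> :: real
  assumes "0 < \<eta>" and small: "\<And>\<delta>. 0 < \<delta> \<Longrightarrow> \<delta> \<le> \<eta> \<Longrightarrow> 0 \<le> a * \<delta> + \<delta>^2"
  shows "0 \<le> a"
proof (rule ccontr)
  assume "\<not> 0 \<le> a"
  define \<delta> where "\<delta> = min \<eta> (- a / 2)"
  have "0 < \<delta>" "\<delta> \<le> \<eta>" "a + \<delta> < 0"
    using \<open>0 < \<eta>\<close> \<open>\<not> 0 \<le> a\<close> by (auto simp: \<delta>_def)
  then have "a * \<delta> + \<delta>^2 < 0"
    by (simp add: power2_eq_square mult_neg_pos flip: distrib_right)
  with small[OF \<open>0 < \<delta>\<close> \<open>\<delta> \<le> \<eta>\<close>] show False by simp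
qed

lemma output_defect_minimizer_slope:
  fixes p q :: "'a::finite pmf" and g :: "'a \<Rightarrow> 'a \<Rightarrow> real"
  assumes "g \<in> coin_biases"
    and minimal: "\<And>g'. g' \<in> coin_biases \<Longrightarrow> output_defect p q g \<le> output_defect p q g'"
    and "s \<noteq> t" and "0 < pmf p s" and "0 < pmf p t"
  defines "d \<equiv> \<lambda>w. coin_output p g w - pmf q w"
  shows "0 < g s t \<Longrightarrow> d s \<le> d t" and "g s t < 1 \<Longrightarrow> d t \<le> d s"
proof -
  define c where "c = pmf p s * pmf p t"
  have "0 < c" using assms by (simp add: c_def)
  have "0 \<le> g s t" "g s t \<le> 1" using \<open>g \<in> coin_biases\<close> by (auto simp: coin_biases_def)
  then have "0 \<le> c * g s t" "0 \<le> c * (1 - g s t)" using \<open>0 < c\<close> by simp_all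
  have perturb: "0 \<le> (d s - d t) * \<delta> + \<delta>^2" if "- (c * g s t) \<le> \<delta>" "\<delta> \<le> c * (1 - g s t)" for \<delta>
  proof -
    have "0 \<le> g s t + \<delta> / c" "g s t + \<delta> / c \<le> 1"
      using that \<open>0 < c\<close> by (simp_all add: field_simps)
    then have "(\<lambda>x y. g x y + (if x = s \<and> y = t then \<delta> / c else 0)) \<in> coin_biases"
      using \<open>g \<in> coin_biases\<close> by (auto simp: coin_biases_def)
    then have "output_defect p q g \<le> output_defect p q (\<lambda>x y. g x y + (if x = s \<and> y = t then \<delta> / c else 0))"
      by (rule minimal)
    with output_defect_perturb[OF \<open>s \<noteq> t\<close>, of p q g "\<delta> / c", folded c_def] show ?thesis
      using \<open>0 < c\<close> unfolding d_def by (simp add: algebra_simps power2_eq_square)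
  qed
  show "d s \<le> d t" if "0 < g s t"
  proof -
    have "0 < c * g s t" using \<open>0 < c\<close> that by simp
    then have "0 \<le> d t - d s"
    proof (rule nonneg_if_nonneg_near_zero)
      show "0 \<le> (d t - d s) * \<delta> + \<delta>^2" if "0 < \<delta>" "\<delta> \<le> c * g s t" for \<delta>
        using perturb[of "- \<delta>"] that \<open>0 \<le> c * (1 - g s t)\<close> by (simp add: left_diff_distrib)
    qed
    then show ?thesis by simp
  qed
  show "d t \<le> d s" if "g s t < 1"
  proof -
    have "0 < c * (1 - g s t)" using \<open>0 < c\<close> that by simp
    then have "0 \<le> d s - d t"
    proof (rule nonneg_if_nonneg_near_zero)
      show "0 \<le> (d s - d t) * \<delta> + \<delta>^2" if "0 < \<delta>" "\<delta> \<le> c * (1 - g s t)" for \<delta>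
        using perturb[of \<delta>] that \<open>0 \<le> c * g s t\<close> by simp
    qed
    then show ?thesis by simp
  qed
qed

lemma output_defect_minimizer_exists:
  fixes p q :: "'a::finite pmf"
  obtains g where "g \<in> coin_biases"
    and "\<And>g'. g' \<in> coin_biases \<Longrightarrow> output_defect p q g \<le> output_defect p q g'"
proof -
  let ?box = "cbox (0::real^('a \<times> 'a)) 1"
  let ?f = "\<lambda>u::real^('a \<times> 'a). output_defect p q (\<lambda>x y. u $ (x, y))"
  have "continuous_on ?box ?f"
    unfolding output_defect_def coin_output_def by (intro continuous_intros)
  moreover have "(0::real^('a \<times> 'a)) \<in> ?box"
    by (auto simp: mem_box_cart)
  ultimately obtain v where "v \<in> ?box" and v_min: "\<And>u. u \<in> ?box \<Longrightarrow> ?f v \<le> ?f u"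
    using continuous_attains_inf[of ?box ?f] by fastforce
  show ?thesis
  proof
    show "(\<lambda>x y. v $ (x, y)) \<in> coin_biases"
      using \<open>v \<in> ?box\<close> by (auto simp: coin_biases_def mem_box_cart)
    show "?f v \<le> output_defect p q g'" if "g' \<in> coin_biases" for g'
      using v_min[of "\<chi> i. g' (fst i) (snd i)"] that by (auto simp: coin_biases_def mem_box_cart)
  qed
qed

lemma sum_coin_output_closed:
  fixes p :: "'a::finite pmf"
  assumes "\<And>z y. z \<in> R \<Longrightarrow> y \<notin> R \<Longrightarrow> pmf p z * pmf p y * g z y = 0"
    and "\<And>z x. z \<in> R \<Longrightarrow> x \<notin> R \<Longrightarrow> pmf p x * pmf p z * (1 - g x z) = 0"
  shows "(\<Sum>z\<in>R. coin_output p g z) = (measure_pmf.prob p R)^2"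
proof -
  have "(\<Sum>z\<in>R. coin_output p g z)
      = (\<Sum>z\<in>R. \<Sum>y\<in>R. pmf p z * pmf p y * g z y) + (\<Sum>z\<in>R. \<Sum>x\<in>R. pmf p x * pmf p z * (1 - g x z))"
  proof -
    have "(\<Sum>y\<in>UNIV. pmf p z * pmf p y * g z y) = (\<Sum>y\<in>R. pmf p z * pmf p y * g z y)"
      and "(\<Sum>x\<in>UNIV. pmf p x * pmf p z * (1 - g x z)) = (\<Sum>x\<in>R. pmf p x * pmf p z * (1 - g x z))"
      if "z \<in> R" for z
      by (rule sum.mono_neutral_right; use assms that in auto)+
    then show ?thesis unfolding coin_output_def sum.distrib by simp
  qed
  also have "(\<Sum>z\<in>R. \<Sum>x\<in>R. pmf p x * pmf p z * (1 - g x z)) = (\<Sum>z\<in>R. \<Sum>y\<in>R. pmf p z * pmf p y * (1 - g z y))"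
    by (rule sum.swap)
  also have "(\<Sum>z\<in>R. \<Sum>y\<in>R. pmf p z * pmf p y * g z y) + \<dots> = (\<Sum>z\<in>R. \<Sum>y\<in>R. pmf p z * pmf p y)"
    unfolding sum.distrib[symmetric] by (intro sum.cong refl) (simp add: algebra_simps)
  also have "\<dots> = (\<Sum>z\<in>R. pmf p z)^2"
    by (simp add: power2_eq_square sum_product)
  also have "\<dots> = (measure_pmf.prob p R)^2"
    by (simp add: measure_measure_pmf_finite)
  finally show ?thesis .
qed

lemma coin_output_eq_if_le:
  fixes p q :: "'a::finite pmf"
  assumes "g \<in> coin_biases" and "\<And>w. coin_output p g w \<le> pmf q w"
  shows "coin_output p g w = pmf q w"
proof -
  have "(\<Sum>w\<in>UNIV. pmf q w - coin_output p g w) = 0"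
    using sum_coin_output[OF assms(1)] by (simp add: sum_subtractf sum_pmf_eq_1)
  then show ?thesis
    using assms(2) sum_nonneg_eq_0_iff[of UNIV "\<lambda>w. pmf q w - coin_output p g w"] by simp
qed

lemma output_defect_minimizer_le:
  fixes p q :: "'a::finite pmf"
  assumes hall: "\<And>A. (measure_pmf.prob p A)^2 \<le> measure_pmf.prob q A"
    and g: "g \<in> coin_biases"
    and minimal: "\<And>g'. g' \<in> coin_biases \<Longrightarrow> output_defect p q g \<le> output_defect p q g'"
  shows "coin_output p g w \<le> pmf q w"
proof -
  define d where "d w = coin_output p g w - pmf q w" for w
  define M where "M = Max (range d)"
  define R where "R = {w. d w = M}"
  have d_le_M: "d w \<le> M" for w
    unfolding M_def by (rule Max_ge) auto
  have "M \<in> range d"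
    unfolding M_def by (rule Max_in) auto
  then have "R \<noteq> {}" unfolding R_def by auto
  have "pmf p z * pmf p y * g z y = 0" if "z \<in> R" "y \<notin> R" for z y
  proof (rule ccontr)
    assume "pmf p z * pmf p y * g z y \<noteq> 0"
    then have "z \<noteq> y" "0 < pmf p z" "0 < pmf p y" "0 < g z y"
      using that g by (auto simp: coin_biases_def less_le)
    then have "d z \<le> d y"
      using output_defect_minimizer_slope(1)[OF g minimal] unfolding d_def by blast
    then show False using that d_le_M[of y] unfolding R_def by auto
  qed
  moreover have "pmf p x * pmf p z * (1 - g x z) = 0" if "z \<in> R" "x \<notin> R" for z x
  proof (rule ccontr)
    assume "pmf p x * pmf p z * (1 - g x z) \<noteq> 0"
    then have "x \<noteq> z" "0 < pmf p x" "0 < pmf p z" "g x z < 1"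
      using that g by (auto simp: coin_biases_def less_le)
    then have "d z \<le> d x"
      using output_defect_minimizer_slope(2)[OF g minimal] unfolding d_def by blast
    then show False using that d_le_M[of x] unfolding R_def by auto
  qed
  ultimately have "(\<Sum>z\<in>R. coin_output p g z) \<le> (\<Sum>z\<in>R. pmf q z)"
    using hall[of R] by (simp add: sum_coin_output_closed measure_measure_pmf_finite)
  then have "(\<Sum>z\<in>R. d z) \<le> 0"
    by (simp add: d_def sum_subtractf)
  moreover have "(\<Sum>z\<in>R. d z) = real (card R) * M"
    by (simp add: R_def)
  moreover have "0 < card R"
    using \<open>R \<noteq> {}\<close> by (simp add: card_gt_0_iff)
  ultimately have "d w \<le> 0"
    using d_le_M[of w] by (auto simp: mult_le_0_iff)
  then show ?thesis by (simp add: d_def)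
qed

lemma coin_bias_with_output_exists:
  fixes p q :: "'a::finite pmf"
  assumes "\<And>A. (measure_pmf.prob p A)^2 \<le> measure_pmf.prob q A"
  obtains g where "g \<in> coin_biases" and "\<And>z. coin_output p g z = pmf q z"
proof -
  obtain g where "g \<in> coin_biases"
    and "\<And>g'. g' \<in> coin_biases \<Longrightarrow> output_defect p q g \<le> output_defect p q g'"
    using output_defect_minimizer_exists[of p q] by blast
  then show ?thesis
    using that coin_output_eq_if_le output_defect_minimizer_le[OF assms] by blast
qed

theorem theorem2:
  fixes p q :: "'a::finite pmf"
  shows "P_star p q = 1 \<longleftrightarrow>
    (\<forall>A :: 'a set. (measure_pmf.prob p A)^2 \<le> measure_pmf.prob q A)"
proof
  assume "P_star p q = 1"
  then show "\<forall>A :: 'a set. (measure_pmf.prob p A)^2 \<le> measure_pmf.prob q A"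
    using P_star_le[of p q] by simp
next
  assume "\<forall>A :: 'a set. (measure_pmf.prob p A)^2 \<le> measure_pmf.prob q A"
  then obtain g where "g \<in> coin_biases" and "\<And>z. coin_output p g z = pmf q z"
    using coin_bias_with_output_exists by blast
  then have "valid_rule p q (coin_rule g)"
    by (simp add: valid_coin_rule_iff)
  then show "P_star p q = 1"
    using acc_prob_coin_rule by (rule P_star_eq_1I)
qed

end
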